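(* Let $\kappa$ be a regular uncountable cardinal. Every proper pleasant ideal on $\kappa$ is subnormal, i.e. is contained in some proper normal ideal on $\kappa$.
   Context: An ideal on $\kappa$ is a family of subsets of $\kappa$ closed under subsets and finite unions, which is $<\kappa$-complete and contains all singletons (so it contains all subsets of size $<\kappa$). It is proper if $\kappa\notin I$. For $A\subseteq\kappa$ and $X_\alpha\subseteq\kappa$, $\bigtriangledown_{\alpha\in A}X_\alpha=\{\xi<\kappa:\exists\alpha<\xi\,(\alpha\in A\wedge \xi\in X_\alpha)\}$. $I$ is normal if $X_\alpha\in I$ for all $\alpha<\kappa$ implies $\bigtriangledown_{\alpha<\kappa}X_\alpha\in I$ (diagonal union with $A=\kappa$). $I$ is pleasant if whenever $A\in I$ and $X_\alpha\in I$ for all $\alpha$, then $\bigtriangledown_{\alpha\in A}X_\alpha\in I$. *)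

theory Defs
  imports Main "HOL-Library.Countable_Set"
begin

text \<open>The cardinal kappa is represented by a cardinal-order relation r (a well-order
  of Field r that is minimal for its cardinality); kappa is identified with Field r and
  alpha < xi means (alpha, xi) in r with alpha different from xi.\<close>

definition is_ideal :: "'a rel \<Rightarrow> 'a set set \<Rightarrow> bool" where
  "is_ideal r I \<longleftrightarrow>
     (\<forall>A\<in>I. A \<subseteq> Field r) \<and>
     (\<forall>A B. A \<in> I \<and> B \<subseteq> A \<longrightarrow> B \<in> I) \<and>
     (\<forall>A B. A \<in> I \<and> B \<in> I \<longrightarrow> A \<union> B \<in> I) \<and>
     (\<forall>F. F \<subseteq> I \<and> (card_of F, r) \<in> ordLess \<longrightarrow> \<Union>F \<in> I) \<and>
     (\<forall>x\<in>Field r. {x} \<in> I)"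

definition proper_ideal :: "'a rel \<Rightarrow> 'a set set \<Rightarrow> bool" where
  "proper_ideal r I \<longleftrightarrow> is_ideal r I \<and> Field r \<notin> I"

definition diag_union :: "'a rel \<Rightarrow> 'a set \<Rightarrow> ('a \<Rightarrow> 'a set) \<Rightarrow> 'a set" where
  "diag_union r A X = {\<xi> \<in> Field r. \<exists>\<alpha>. (\<alpha>, \<xi>) \<in> r \<and> \<alpha> \<noteq> \<xi> \<and> \<alpha> \<in> A \<and> \<xi> \<in> X \<alpha>}"

definition normal_ideal :: "'a rel \<Rightarrow> 'a set set \<Rightarrow> bool" where
  "normal_ideal r I \<longleftrightarrow> is_ideal r I \<and>
     (\<forall>X. (\<forall>\<alpha>\<in>Field r. X \<alpha> \<in> I) \<longrightarrow> diag_union r (Field r) X \<in> I)"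

definition pleasant_ideal :: "'a rel \<Rightarrow> 'a set set \<Rightarrow> bool" where
  "pleasant_ideal r I \<longleftrightarrow> is_ideal r I \<and>
     (\<forall>A X. A \<in> I \<and> (\<forall>\<alpha>\<in>Field r. X \<alpha> \<in> I) \<longrightarrow> diag_union r A X \<in> I)"

definition subnormal_ideal :: "'a rel \<Rightarrow> 'a set set \<Rightarrow> bool" where
  "subnormal_ideal r I \<longleftrightarrow> (\<exists>J. proper_ideal r J \<and> normal_ideal r J \<and> I \<subseteq> J)"

end

theory Submission
  imports Defs
begin

(* The witness is the normal ideal generated by I, consisting of the subsets of the sets
  B \<union> \<nabla>\<^sub>\<alpha> X\<^sub>\<alpha> with B and all X\<^sub>\<alpha> in I. It is an ideal by \<kappa>-completeness of I, and it is
  normal because a diagonal union of diagonal unions is again a diagonal union, every initial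
  segment of \<kappa> having fewer than \<kappa> elements. It is proper: if \<kappa> = B \<union> \<nabla>\<^sub>\<alpha> X\<^sub>\<alpha>, pleasantness
  keeps A\<^sub>0 = B, A\<^sub>n\<^sub>+\<^sub>1 = A\<^sub>n \<union> \<nabla>\<^sub>\<alpha>\<^sub>\<in>\<^sub>A\<^sub>n X\<^sub>\<alpha> in I, hence also their union C, as \<kappa> is
  uncountable; but C contains B and is closed under A \<mapsto> \<nabla>\<^sub>\<alpha>\<^sub>\<in>\<^sub>A X\<^sub>\<alpha>, so by induction
  on \<xi> it is all of \<kappa>. *)

unbundle cardinal_syntax

lemma finite_card_of_ordLess:
  assumes "Card_order r" and "\<not> finite (Field r)" and "finite A"
  shows "|A| <o r"
  using assms card_order_on_well_order_on card_of_Well_order finite_ordLess_infinite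
  by (metis Field_card_of)

lemma Well_order_refl: "Well_order r \<Longrightarrow> a \<in> Field r \<Longrightarrow> (a, a) \<in> r"
  by (simp add: order_on_defs refl_on_def)

lemma card_of_under_ordLess:
  assumes "Card_order r" and "\<not> finite (Field r)" and "a \<in> Field r"
  shows "|under r a| <o r"
proof -
  have "|{a}| <o r"
    by (rule finite_card_of_ordLess[OF assms(1,2)]) simp
  moreover have "under r a = {a} \<union> underS r a"
    using Well_order_refl[OF card_order_on_well_order_on[OF assms(1)] assms(3)]
    unfolding under_def underS_def by blast
  ultimately show ?thesis
    using card_of_Un_ordLess_infinite_Field[OF assms(2,1) _ card_of_underS[OF assms(1,3)]]
    by metis
qed

lemma uncountable_Card_order_nat_ordLess:
  assumes "Card_order r" and "\<not> countable (Field r)"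
  shows "|UNIV :: nat set| <o r"
proof -
  have "\<not> |Field r| \<le>o |UNIV :: nat set|"
    using assms(2) unfolding countable_def card_of_ordLeq[symmetric] by auto
  then have "|UNIV :: nat set| <o |Field r|"
    using not_ordLeq_iff_ordLess[OF card_of_Well_order card_of_Well_order] by blast
  then show ?thesis
    using card_of_Field_ordIso[OF assms(1)] ordLess_ordIso_trans by blast
qed

lemma ideal_subset_Field: "is_ideal r I \<Longrightarrow> A \<in> I \<Longrightarrow> A \<subseteq> Field r"
  unfolding is_ideal_def by (elim conjE) simp

lemma ideal_subset: "is_ideal r I \<Longrightarrow> A \<in> I \<Longrightarrow> B \<subseteq> A \<Longrightarrow> B \<in> I"
  unfolding is_ideal_def by (elim conjE) metis

lemma ideal_Un: "is_ideal r I \<Longrightarrow> A \<in> I \<Longrightarrow> B \<in> I \<Longrightarrow> A \<union> B \<in> I"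
  unfolding is_ideal_def by (elim conjE) simp

lemma ideal_singleton: "is_ideal r I \<Longrightarrow> x \<in> Field r \<Longrightarrow> {x} \<in> I"
  unfolding is_ideal_def by (elim conjE) simp

lemma ideal_empty: "is_ideal r I \<Longrightarrow> Field r \<noteq> {} \<Longrightarrow> {} \<in> I"
  by (metis all_not_in_conv empty_subsetI ideal_singleton ideal_subset)

lemma ideal_UN:
  assumes "is_ideal r I" and "|S| <o r" and "\<And>s. s \<in> S \<Longrightarrow> f s \<in> I"
  shows "(\<Union>s\<in>S. f s) \<in> I"
proof -
  have "|f ` S| <o r"
    using assms(2) card_of_image ordLeq_ordLess_trans by blast
  moreover have "f ` S \<subseteq> I"
    using assms(3) by blast
  ultimately show ?thesis
    using assms(1) unfolding is_ideal_def by (elim conjE) simp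
qed

lemma diag_union_mono:
  "(\<And>\<alpha>. \<alpha> \<in> A \<Longrightarrow> X \<alpha> \<subseteq> Y \<alpha>) \<Longrightarrow> diag_union r A X \<subseteq> diag_union r A Y"
  unfolding diag_union_def by blast

lemma diag_union_UN_index:
  "diag_union r (\<Union>i\<in>S. A i) X = (\<Union>i\<in>S. diag_union r (A i) X)"
  unfolding diag_union_def by blast

lemma diag_union_diag_union_subset:
  assumes "Well_order r"
  shows "diag_union r (Field r) (\<lambda>\<alpha>. B \<alpha> \<union> diag_union r (Field r) (Y \<alpha>))
    \<subseteq> diag_union r (Field r) (\<lambda>\<gamma>. \<Union>\<alpha>\<in>under r \<gamma>. B \<alpha> \<union> (\<Union>\<beta>\<in>under r \<gamma>. Y \<alpha> \<beta>))"
proof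
  fix \<xi> assume "\<xi> \<in> diag_union r (Field r) (\<lambda>\<alpha>. B \<alpha> \<union> diag_union r (Field r) (Y \<alpha>))"
  then obtain \<alpha> where \<alpha>: "\<xi> \<in> Field r" "(\<alpha>, \<xi>) \<in> r" "\<alpha> \<noteq> \<xi>" "\<alpha> \<in> Field r"
    and "\<xi> \<in> B \<alpha> \<or> \<xi> \<in> diag_union r (Field r) (Y \<alpha>)"
    unfolding diag_union_def by blast
  have refl: "(\<alpha>, \<alpha>) \<in> r"
    using Well_order_refl[OF assms \<alpha>(4)] .
  consider "\<xi> \<in> B \<alpha>"
    | \<beta> where "(\<beta>, \<xi>) \<in> r" "\<beta> \<noteq> \<xi>" "\<beta> \<in> Field r" "\<xi> \<in> Y \<alpha> \<beta>"
    using \<open>\<xi> \<in> B \<alpha> \<or> _\<close> unfolding diag_union_def by blast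
  then show "\<xi> \<in> diag_union r (Field r) (\<lambda>\<gamma>. \<Union>\<alpha>\<in>under r \<gamma>. B \<alpha> \<union> (\<Union>\<beta>\<in>under r \<gamma>. Y \<alpha> \<beta>))"
  proof cases
    case 1
    with \<alpha> refl show ?thesis
      unfolding diag_union_def under_def by blast
  next
    case (2 \<beta>)
    \<comment> \<open>both indices lie below the larger one of \<alpha> and \<beta>, which is still below \<xi>\<close>
    have "(\<alpha>, \<beta>) \<in> r \<or> (\<beta>, \<alpha>) \<in> r"
      using assms \<alpha>(4) 2(3) wo_rel.TOTALS unfolding wo_rel_def by blast
    moreover have "(\<beta>, \<beta>) \<in> r"
      using Well_order_refl[OF assms 2(3)] .
    ultimately show ?thesis
      using \<alpha> 2 refl unfolding diag_union_def under_def by blast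
  qed
qed

lemma covered_by_diag_closed_set:
  assumes "Well_order r" and "B \<subseteq> C" and "diag_union r C X \<subseteq> C"
    and "Field r \<subseteq> B \<union> diag_union r (Field r) X"
  shows "Field r \<subseteq> C"
proof -
  have "\<xi> \<in> Field r \<longrightarrow> \<xi> \<in> C" for \<xi>
  proof (induction \<xi> rule: wo_rel.well_order_induct[of r])
    show "wo_rel r" using assms(1) unfolding wo_rel_def .
  next
    case (2 \<xi>)
    show ?case
    proof
      assume \<xi>: "\<xi> \<in> Field r"
      show "\<xi> \<in> C"
      proof (cases "\<xi> \<in> B")
        case True
        with assms(2) show ?thesis by blast
      next
        case False
        then obtain \<alpha> where "(\<alpha>, \<xi>) \<in> r" "\<alpha> \<noteq> \<xi>" "\<alpha> \<in> Field r" "\<xi> \<in> X \<alpha>"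
          using assms(4) \<xi> unfolding diag_union_def by blast
        with 2 \<xi> have "\<xi> \<in> diag_union r C X"
          unfolding diag_union_def by blast
        with assms(3) show ?thesis by blast
      qed
    qed
  qed
  then show ?thesis by blast
qed

lemma pleasant_ideal_diag_closed_superset:
  assumes "pleasant_ideal r I" and "|UNIV :: nat set| <o r"
    and "B \<in> I" and "\<forall>\<alpha>\<in>Field r. X \<alpha> \<in> I"
  obtains C where "C \<in> I" and "B \<subseteq> C" and "diag_union r C X \<subseteq> C"
proof -
  have I: "is_ideal r I"
    using assms(1) unfolding pleasant_ideal_def by simp
  define A where "A n = ((\<lambda>S. S \<union> diag_union r S X) ^^ n) B" for n
  have A_0: "A 0 = B" and A_Suc: "A (Suc n) = A n \<union> diag_union r (A n) X" for n
    unfolding A_def by simp_all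
  have "A n \<in> I" for n
  proof (induction n)
    case 0
    then show ?case using assms(3) unfolding A_0 .
  next
    case (Suc n)
    then have "diag_union r (A n) X \<in> I"
      using assms(1,4) unfolding pleasant_ideal_def by simp
    with Suc show ?case
      unfolding A_Suc by (rule ideal_Un[OF I])
  qed
  then have "(\<Union>n. A n) \<in> I"
    by (rule ideal_UN[OF I assms(2)])
  moreover have "B \<subseteq> (\<Union>n. A n)"
    using A_0 by blast
  moreover have "diag_union r (\<Union>n. A n) X \<subseteq> (\<Union>n. A n)"
    unfolding diag_union_UN_index using A_Suc by blast
  ultimately show ?thesis by (rule that)
qed

definition normal_closure :: "'a rel \<Rightarrow> 'a set set \<Rightarrow> 'a set set" where
  "normal_closure r I = {Y. Y \<subseteq> Field r \<and>
     (\<exists>B\<in>I. \<exists>X. (\<forall>\<alpha>\<in>Field r. X \<alpha> \<in> I) \<and> Y \<subseteq> B \<union> diag_union r (Field r) X)}"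

lemma normal_closureI:
  "Y \<subseteq> Field r \<Longrightarrow> B \<in> I \<Longrightarrow> (\<And>\<alpha>. \<alpha> \<in> Field r \<Longrightarrow> X \<alpha> \<in> I)
    \<Longrightarrow> Y \<subseteq> B \<union> diag_union r (Field r) X \<Longrightarrow> Y \<in> normal_closure r I"
  unfolding normal_closure_def by blast

lemma normal_closureE:
  assumes "Y \<in> normal_closure r I"
  obtains B X where "Y \<subseteq> Field r" "B \<in> I" "\<forall>\<alpha>\<in>Field r. X \<alpha> \<in> I"
    "Y \<subseteq> B \<union> diag_union r (Field r) X"
  using assms unfolding normal_closure_def by blast

lemma normal_closure_subset:
  assumes "Y \<in> normal_closure r I" and "Z \<subseteq> Y"
  shows "Z \<in> normal_closure r I"
proof -
  obtain B X where "Y \<subseteq> Field r" "B \<in> I" "\<forall>\<alpha>\<in>Field r. X \<alpha> \<in> I"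
    "Y \<subseteq> B \<union> diag_union r (Field r) X"
    using assms(1) by (rule normal_closureE)
  with assms(2) show ?thesis
    by (intro normal_closureI[of _ _ B _ X]) auto
qed

lemma subset_normal_closure:
  assumes "is_ideal r I"
  shows "I \<subseteq> normal_closure r I"
proof
  fix Y assume "Y \<in> I"
  moreover have "{} \<in> I"
    using assms \<open>Y \<in> I\<close> ideal_subset by blast
  ultimately show "Y \<in> normal_closure r I"
    using assms ideal_subset_Field by (intro normal_closureI[of _ _ Y _ "\<lambda>_. {}"]) auto
qed

lemma normal_closure_UN:
  assumes I: "is_ideal r I" and "|S| <o r" and Y: "\<And>s. s \<in> S \<Longrightarrow> Y s \<in> normal_closure r I"
  shows "(\<Union>s\<in>S. Y s) \<in> normal_closure r I"
proof -
  have "\<forall>s\<in>S. \<exists>B X. B \<in> I \<and> (\<forall>\<alpha>\<in>Field r. X \<alpha> \<in> I) \<and> Y s \<subseteq> B \<union> diag_union r (Field r) X"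
    using Y by (meson normal_closureE)
  then obtain B X where BX: "\<And>s. s \<in> S \<Longrightarrow> B s \<in> I" "\<And>s \<alpha>. s \<in> S \<Longrightarrow> \<alpha> \<in> Field r \<Longrightarrow> X s \<alpha> \<in> I"
    "\<And>s. s \<in> S \<Longrightarrow> Y s \<subseteq> B s \<union> diag_union r (Field r) (X s)"
    by metis
  show ?thesis
  proof (rule normal_closureI)
    show "(\<Union>s\<in>S. Y s) \<subseteq> Field r"
      using Y by (blast elim: normal_closureE)
    show "(\<Union>s\<in>S. B s) \<in> I"
      using BX(1) by (rule ideal_UN[OF I assms(2)])
    show "(\<Union>s\<in>S. X s \<alpha>) \<in> I" if "\<alpha> \<in> Field r" for \<alpha>
      using BX(2)[OF _ that] by (rule ideal_UN[OF I assms(2)])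
    have "diag_union r (Field r) (X s) \<subseteq> diag_union r (Field r) (\<lambda>\<alpha>. \<Union>s\<in>S. X s \<alpha>)"
      if "s \<in> S" for s
      using that by (intro diag_union_mono) blast
    then show "(\<Union>s\<in>S. Y s) \<subseteq> (\<Union>s\<in>S. B s) \<union> diag_union r (Field r) (\<lambda>\<alpha>. \<Union>s\<in>S. X s \<alpha>)"
      using BX(3) by blast
  qed
qed

lemma ideal_normal_closure:
  assumes I: "is_ideal r I" and "Card_order r" and "\<not> finite (Field r)"
  shows "is_ideal r (normal_closure r I)"
  unfolding is_ideal_def
proof (intro conjI allI impI ballI)
  show "A \<subseteq> Field r" if "A \<in> normal_closure r I" for A
    using that by (rule normal_closureE)
  show "B \<in> normal_closure r I" if "A \<in> normal_closure r I \<and> B \<subseteq> A" for A B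
    using that by (blast intro: normal_closure_subset)
  show "\<Union>F \<in> normal_closure r I" if "F \<subseteq> normal_closure r I \<and> |F| <o r" for F
    using normal_closure_UN[OF I, of F id] that by auto
  show "A \<union> B \<in> normal_closure r I"
    if "A \<in> normal_closure r I \<and> B \<in> normal_closure r I" for A B
    using normal_closure_UN[OF I finite_card_of_ordLess[OF assms(2,3)], of "{A, B}" id] that
    by auto
  show "{x} \<in> normal_closure r I" if "x \<in> Field r" for x
    using I that ideal_singleton by (intro normal_closureI[of _ _ "{x}" _ "\<lambda>_. {x}"]) auto
qed

lemma normal_ideal_normal_closure:
  assumes I: "is_ideal r I" and C: "Card_order r" and inf: "\<not> finite (Field r)"
  shows "normal_ideal r (normal_closure r I)"
  unfolding normal_ideal_def
proof (intro conjI allI impI)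
  show "is_ideal r (normal_closure r I)"
    using assms by (rule ideal_normal_closure)
  fix X assume "\<forall>\<alpha>\<in>Field r. X \<alpha> \<in> normal_closure r I"
  then have "\<forall>\<alpha>\<in>Field r. \<exists>B Y. B \<in> I \<and> (\<forall>\<beta>\<in>Field r. Y \<beta> \<in> I)
      \<and> X \<alpha> \<subseteq> B \<union> diag_union r (Field r) Y"
    by (meson normal_closureE)
  then obtain B Y where B: "\<And>\<alpha>. \<alpha> \<in> Field r \<Longrightarrow> B \<alpha> \<in> I"
    and Y: "\<And>\<alpha> \<beta>. \<alpha> \<in> Field r \<Longrightarrow> \<beta> \<in> Field r \<Longrightarrow> Y \<alpha> \<beta> \<in> I"
    and X: "\<And>\<alpha>. \<alpha> \<in> Field r \<Longrightarrow> X \<alpha> \<subseteq> B \<alpha> \<union> diag_union r (Field r) (Y \<alpha>)"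
    by metis
  define Z where "Z \<gamma> = (\<Union>\<alpha>\<in>under r \<gamma>. B \<alpha> \<union> (\<Union>\<beta>\<in>under r \<gamma>. Y \<alpha> \<beta>))" for \<gamma>
  have "Z \<gamma> \<in> I" if "\<gamma> \<in> Field r" for \<gamma>
    unfolding Z_def using card_of_under_ordLess[OF C inf that] under_Field[of r \<gamma>]
    by (blast intro: ideal_UN[OF I] ideal_Un[OF I] B Y)
  moreover have "{} \<in> I"
    using ideal_empty[OF I infinite_imp_nonempty[OF inf]] .
  moreover have "diag_union r (Field r) X \<subseteq> diag_union r (Field r) Z"
    using diag_union_mono[of "Field r" X, OF X] diag_union_diag_union_subset[of r B Y]
      card_order_on_well_order_on[OF C] unfolding Z_def by blast
  ultimately show "diag_union r (Field r) X \<in> normal_closure r I"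
    by (intro normal_closureI[of _ _ "{}"]) (auto simp: diag_union_def)
qed

lemma Field_notin_normal_closure:
  assumes "proper_ideal r I" and "pleasant_ideal r I"
    and "Well_order r" and "|UNIV :: nat set| <o r"
  shows "Field r \<notin> normal_closure r I"
proof
  assume "Field r \<in> normal_closure r I"
  then obtain B X where B: "B \<in> I" and X: "\<forall>\<alpha>\<in>Field r. X \<alpha> \<in> I"
    and cover: "Field r \<subseteq> B \<union> diag_union r (Field r) X"
    by (rule normal_closureE)
  obtain C where "C \<in> I" "B \<subseteq> C" "diag_union r C X \<subseteq> C"
    by (rule pleasant_ideal_diag_closed_superset[OF assms(2,4) B X])
  moreover have "is_ideal r I" and "Field r \<notin> I"
    using assms(1) unfolding proper_ideal_def by simp_all
  ultimately show False
    using covered_by_diag_closed_set[OF assms(3) _ _ cover] ideal_subset by metis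
qed

theorem theorem2p2:
  fixes r :: "'a rel" and I :: "'a set set"
  assumes "Card_order r" and "regularCard r" and "\<not> countable (Field r)"
    and "proper_ideal r I" and "pleasant_ideal r I"
  shows "subnormal_ideal r I"
proof -
  have I: "is_ideal r I"
    using assms(4) unfolding proper_ideal_def by blast
  have inf: "\<not> finite (Field r)"
    using assms(3) countable_finite by blast
  have "proper_ideal r (normal_closure r I)"
    unfolding proper_ideal_def
    using ideal_normal_closure[OF I assms(1) inf] Field_notin_normal_closure[OF assms(4,5)]
      card_order_on_well_order_on[OF assms(1)] uncountable_Card_order_nat_ordLess[OF assms(1,3)]
    by blast
  then show ?thesis
    unfolding subnormal_ideal_def
    using normal_ideal_normal_closure[OF I assms(1) inf] subset_normal_closure[OF I] by blast
qed

end
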